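(* For every positive integer $k$, there exists a digraph $G \in \mathcal{C}_3$ such that $\vec{\chi}(G) \geq k$.
   Context: All digraphs are finite and simple: no loops, no multiple arcs, and for two distinct vertices $u,v$ at most one of the arcs $uv$, $vu$ is present. A $k$-dicolouring of a digraph $D$ is a partition of $V(D)$ into $k$ sets $V_1,\dots,V_k$ (some possibly empty) such that each induced subdigraph $D[V_i]$ is acyclic (contains no directed cycle). The dichromatic number $\vec{\chi}(D)$ is the smallest $k$ such that $D$ admits a $k$-dicolouring. $TT_3$ denotes the transitive tournament on 3 vertices (a triangle oriented acyclically); a directed triangle is a directed cycle of length 3. $\mathcal{C}_3$ is the class of digraphs that contain no $TT_3$ as a subdigraph and contain no induced directed cycle of length at least $4$ (so every induced directed cycle is a directed triangle). *)

theory Defs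
  imports Main
begin

definition digraph :: "'a set \<Rightarrow> ('a \<times> 'a) set \<Rightarrow> bool" where
  "digraph V A \<longleftrightarrow> finite V \<and> A \<subseteq> V \<times> V \<and> (\<forall>v. (v, v) \<notin> A)
     \<and> (\<forall>u v. (u, v) \<in> A \<longrightarrow> (v, u) \<notin> A)"

definition induced_arcs :: "('a \<times> 'a) set \<Rightarrow> 'a set \<Rightarrow> ('a \<times> 'a) set" where
  "induced_arcs A S = A \<inter> (S \<times> S)"

definition dicolouring :: "'a set \<Rightarrow> ('a \<times> 'a) set \<Rightarrow> nat \<Rightarrow> ('a \<Rightarrow> nat) \<Rightarrow> bool" where
  "dicolouring V A k c \<longleftrightarrow> (\<forall>v\<in>V. c v < k)
     \<and> (\<forall>i<k. acyclic (induced_arcs A {v\<in>V. c v = i}))"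

definition dichromatic_number :: "'a set \<Rightarrow> ('a \<times> 'a) set \<Rightarrow> nat" where
  "dichromatic_number V A = (LEAST k. \<exists>c. dicolouring V A k c)"

definition has_TT3 :: "('a \<times> 'a) set \<Rightarrow> bool" where
  "has_TT3 A \<longleftrightarrow> (\<exists>a b c. a \<noteq> b \<and> b \<noteq> c \<and> a \<noteq> c
      \<and> (a, b) \<in> A \<and> (b, c) \<in> A \<and> (a, c) \<in> A)"

definition dir_cycle :: "('a \<times> 'a) set \<Rightarrow> 'a list \<Rightarrow> bool" where
  "dir_cycle A vs \<longleftrightarrow> length vs \<ge> 2 \<and> distinct vs
     \<and> (\<forall>i < length vs. (vs ! i, vs ! ((i + 1) mod length vs)) \<in> A)"

definition induced_dir_cycle :: "'a set \<Rightarrow> ('a \<times> 'a) set \<Rightarrow> 'a list \<Rightarrow> bool" where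
  "induced_dir_cycle V A vs \<longleftrightarrow> set vs \<subseteq> V \<and> dir_cycle A vs
     \<and> induced_arcs A (set vs) = {(vs ! i, vs ! ((i + 1) mod length vs)) | i. i < length vs}"

definition in_C3 :: "'a set \<Rightarrow> ('a \<times> 'a) set \<Rightarrow> bool" where
  "in_C3 V A \<longleftrightarrow> \<not> has_TT3 A \<and> (\<forall>vs. induced_dir_cycle V A vs \<longrightarrow> length vs < 4)"

end

theory Submission imports Defs "HOL-Library.Ramsey" "HOL-Library.Nat_Bijection" begin

text \<open>Take as vertices the triples \<open>a < b < c < N\<close>, with a shift arc \<open>abc \<rightarrow> bcd\<close> and a back
  arc \<open>abc \<rightarrow> xya\<close> whenever the head ends where the tail starts. No \<open>TT\<^sub>3\<close> appears, and if
  \<open>u \<rightarrow> v \<rightarrow> w\<close> lies on an induced cycle with \<open>w\<close> of largest first coordinate, both arcs are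
  shifts and \<open>w \<rightarrow> u\<close> is a back arc, so the cycle is a triangle. Colouring each triple by the
  colour of its vertex, Ramsey's theorem for triples yields \<open>a < b < c < d < e\<close> with
  \<open>abc, bcd, cde\<close> of one colour, and these span the directed triangle
  \<open>abc \<rightarrow> bcd \<rightarrow> cde \<rightarrow> abc\<close>.\<close>

lemma dicolouring_exists:
  assumes "digraph V A"
  shows "\<exists>k c. dicolouring V A k c"
proof -
  have loopless: "(v, v) \<notin> A" for v
    using assms by (simp add: digraph_def)
  have "finite V"
    using assms by (simp add: digraph_def)
  then obtain c :: "'a \<Rightarrow> nat" and n where c: "c ` V = {i. i < n}" "inj_on c V"
    using finite_imp_inj_to_nat_seg[of V] by blast
  have "induced_arcs A {v \<in> V. c v = i} = {}" for i
  proof -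
    have "(u, v) \<notin> A" if "u \<in> V" "v \<in> V" "c u = c v" for u v
      using inj_onD[OF c(2) that(3,1,2)] loopless by simp
    then show ?thesis by (auto simp: induced_arcs_def)
  qed
  moreover have "c v < n" if "v \<in> V" for v
    using c(1) that by auto
  ultimately have "dicolouring V A n c"
    by (simp add: dicolouring_def acyclic_def)
  then show ?thesis by blast
qed

lemma dichromatic_number_geI:
  assumes "digraph V A" and "\<And>j c. dicolouring V A j c \<Longrightarrow> k \<le> j"
  shows "k \<le> dichromatic_number V A"
proof -
  have "\<exists>c. dicolouring V A (dichromatic_number V A) c"
    unfolding dichromatic_number_def using dicolouring_exists[OF assms(1)] by (rule LeastI_ex)
  then show ?thesis using assms(2) by blast
qed

lemma dicolouring_no_monochromatic_triangle:
  assumes "dicolouring V A k c" "x \<in> V" "y \<in> V" "z \<in> V" "c x = c y" "c y = c z"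
    and "(x, y) \<in> A" "(y, z) \<in> A" "(z, x) \<in> A"
  shows False
proof -
  let ?S = "{v \<in> V. c v = c x}"
  have "acyclic (induced_arcs A ?S)"
    using assms(1,2) by (auto simp: dicolouring_def)
  moreover have "(x, y) \<in> induced_arcs A ?S" "(y, z) \<in> induced_arcs A ?S" "(z, x) \<in> induced_arcs A ?S"
    using assms by (auto simp: induced_arcs_def)
  then have "(x, x) \<in> (induced_arcs A ?S)\<^sup>+"
    by (meson trancl.r_into_trancl trancl_into_trancl)
  ultimately show False by (simp add: acyclic_def)
qed

lemma dir_cycle_has_predecessor:
  assumes "dir_cycle A vs" "x \<in> set vs"
  shows "\<exists>y \<in> set vs. (y, x) \<in> A"
proof -
  let ?m = "length vs"
  from assms(2) obtain j where j: "j < ?m" "x = vs ! j" by (auto simp: in_set_conv_nth)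
  define i where "i = (if j = 0 then ?m - 1 else j - 1)"
  have "i < ?m" "(i + 1) mod ?m = j" using j by (auto simp: i_def)
  then show ?thesis using assms(1) j by (metis dir_cycle_def nth_mem)
qed

lemma induced_dir_cycle_arc_nth:
  assumes "induced_dir_cycle V A vs" "i < length vs" "y \<in> set vs" "(vs ! i, y) \<in> A"
  shows "y = vs ! ((i + 1) mod length vs)"
proof -
  have "(vs ! i, y) \<in> induced_arcs A (set vs)"
    using assms by (simp add: induced_arcs_def)
  then obtain i' where i': "i' < length vs" "vs ! i = vs ! i'" "y = vs ! ((i' + 1) mod length vs)"
    using assms(1) by (auto simp: induced_dir_cycle_def)
  moreover have "distinct vs" using assms(1) by (simp add: induced_dir_cycle_def dir_cycle_def)
  ultimately show ?thesis using assms(2) by (simp add: nth_eq_iff_index_eq)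
qed

text \<open>Following the arcs of a directed triangle from \<open>x = vs ! i\<close> returns to \<open>vs ! ((i + 3) mod m)\<close>,
  so \<open>m\<close> divides 3.\<close>

lemma induced_dir_cycle_triangle:
  assumes cyc: "induced_dir_cycle V A vs"
    and "x \<in> set vs" "y \<in> set vs" "z \<in> set vs" "(x, y) \<in> A" "(y, z) \<in> A" "(z, x) \<in> A"
  shows "length vs \<le> 3"
proof -
  let ?m = "length vs"
  from assms(2) obtain i where i: "i < ?m" "x = vs ! i" by (auto simp: in_set_conv_nth)
  have "?m > 0" using i(1) by linarith
  have "y = vs ! ((i + 1) mod ?m)"
    using induced_dir_cycle_arc_nth[OF cyc] assms i by blast
  moreover have "((i + 1) mod ?m + 1) mod ?m = (i + 2) mod ?m"
    using mod_add_left_eq[of "i + 1" ?m 1] by simp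
  ultimately have "z = vs ! ((i + 2) mod ?m)"
    using induced_dir_cycle_arc_nth[OF cyc, of "(i + 1) mod ?m" z] assms \<open>?m > 0\<close> by simp
  moreover have "((i + 2) mod ?m + 1) mod ?m = (i + 3) mod ?m"
    using mod_add_left_eq[of "i + 2" ?m 1] by (simp add: numeral_3_eq_3)
  ultimately have "vs ! i = vs ! ((i + 3) mod ?m)"
    using induced_dir_cycle_arc_nth[OF cyc, of "(i + 2) mod ?m" x] assms i \<open>?m > 0\<close> by simp
  moreover have "distinct vs" using cyc by (simp add: induced_dir_cycle_def dir_cycle_def)
  ultimately have "i mod ?m = (i + 3) mod ?m"
    using i \<open>?m > 0\<close> by (simp add: nth_eq_iff_index_eq)
  then have "?m dvd 3" using mod_eq_dvd_iff_nat[of i "i + 3" ?m] by simp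
  then show ?thesis by (simp add: dvd_imp_le)
qed

lemma monochromatic_consecutive_triples:
  fixes g :: "nat \<Rightarrow> nat \<Rightarrow> nat \<Rightarrow> nat"
  assumes "partn_lst {..<N} (replicate k 5) 3"
    and "\<And>a b c. a < b \<Longrightarrow> b < c \<Longrightarrow> c < N \<Longrightarrow> g a b c < k"
  obtains a b c d e where "a < b" "b < c" "c < d" "d < e" "e < N"
    "g a b c = g b c d" "g b c d = g c d e"
proof -
  define f where "f X = g (Min X) (Min (X - {Min X})) (Max X)" for X :: "nat set"
  have f: "f {a, b, c} = g a b c" if "a < b" "b < c" for a b c
  proof -
    have "Min {a, b, c} = a" "Min ({a, b, c} - {a}) = b" "Max {a, b, c} = c" using that by auto
    then show ?thesis by (simp add: f_def)
  qed
  have "f \<in> nsets {..<N} 3 \<rightarrow> {..<length (replicate k (5::nat))}"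
    using assms(2) f by (fastforce simp: ordered_nsets_3_eq)
  from partn_lstE[OF assms(1) this refl] obtain i H where
    "i < k" "H \<in> nsets {..<N} 5" and mono: "f ` nsets H 3 \<subseteq> {i}"
    by auto
  then obtain a b c d e where H: "H = {a, b, c, d, e}" "a < b" "b < c" "c < d" "d < e" "e < N"
    unfolding ordered_nsets_5_eq by auto
  have "g x y z = i" if "x \<in> H" "y \<in> H" "z \<in> H" "x < y" "y < z" for x y z
  proof -
    have "{x, y, z} \<in> nsets H 3" using that by (auto simp: nsets_def card_insert_if)
    then show ?thesis using mono f[OF that(4,5)] by auto
  qed
  with H show thesis by (intro that[of a b c d e]) auto
qed

text \<open>Triples are coded as natural numbers since the theorem asks for \<open>V :: nat set\<close>.\<close>

definition triple :: "nat \<Rightarrow> nat \<Rightarrow> nat \<Rightarrow> nat" where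
  "triple a b c = prod_encode (a, prod_encode (b, c))"

definition tri_fst :: "nat \<Rightarrow> nat" where "tri_fst u = fst (prod_decode u)"
definition tri_snd :: "nat \<Rightarrow> nat" where "tri_snd u = fst (prod_decode (snd (prod_decode u)))"
definition tri_thd :: "nat \<Rightarrow> nat" where "tri_thd u = snd (prod_decode (snd (prod_decode u)))"

lemma tri_triple [simp]:
  "tri_fst (triple a b c) = a" "tri_snd (triple a b c) = b" "tri_thd (triple a b c) = c"
  by (simp_all add: triple_def tri_fst_def tri_snd_def tri_thd_def)

lemma triple_tri: "triple (tri_fst u) (tri_snd u) (tri_thd u) = u"
  by (simp add: triple_def tri_fst_def tri_snd_def tri_thd_def)

definition triple_vertices :: "nat \<Rightarrow> nat set" where
  "triple_vertices N = {u. tri_fst u < tri_snd u \<and> tri_snd u < tri_thd u \<and> tri_thd u < N}"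

definition triple_arcs :: "nat \<Rightarrow> (nat \<times> nat) set" where
  "triple_arcs N = {(u, v). u \<in> triple_vertices N \<and> v \<in> triple_vertices N
     \<and> (tri_fst v = tri_snd u \<and> tri_snd v = tri_thd u \<or> tri_thd v = tri_fst u)}"

lemma triple_in_vertices [simp]: "triple a b c \<in> triple_vertices N \<longleftrightarrow> a < b \<and> b < c \<and> c < N"
  by (simp add: triple_vertices_def)

lemma finite_triple_vertices: "finite (triple_vertices N)"
proof -
  have "triple_vertices N \<subseteq> (\<lambda>(a, b, c). triple a b c) ` ({..<N} \<times> {..<N} \<times> {..<N})"
  proof
    fix u assume "u \<in> triple_vertices N"
    then have "(tri_fst u, tri_snd u, tri_thd u) \<in> {..<N} \<times> {..<N} \<times> {..<N}"
      by (auto simp: triple_vertices_def)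
    then show "u \<in> (\<lambda>(a, b, c). triple a b c) ` ({..<N} \<times> {..<N} \<times> {..<N})"
      by (metis (no_types, lifting) case_prod_conv triple_tri image_eqI)
  qed
  then show ?thesis by (rule finite_subset) auto
qed

lemma digraph_triples: "digraph (triple_vertices N) (triple_arcs N)"
  using finite_triple_vertices
  by (auto simp: digraph_def triple_arcs_def triple_vertices_def)

lemma triple_arcs_no_TT3: "\<not> has_TT3 (triple_arcs N)"
  by (auto simp: has_TT3_def triple_arcs_def triple_vertices_def)

lemma triple_arcs_close_path:
  assumes "(u, v) \<in> triple_arcs N" "(v, w) \<in> triple_arcs N"
    and "tri_fst u \<le> tri_fst w" "tri_fst v \<le> tri_fst w"
  shows "(w, u) \<in> triple_arcs N"
  using assms by (auto simp: triple_arcs_def triple_vertices_def)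

lemma triple_arcs_no_long_induced_cycle:
  assumes cyc: "induced_dir_cycle (triple_vertices N) (triple_arcs N) vs"
  shows "length vs < 4"
proof -
  have dc: "dir_cycle (triple_arcs N) vs" using cyc by (simp add: induced_dir_cycle_def)
  then have "2 \<le> length vs" by (simp add: dir_cycle_def)
  then have "set vs \<noteq> {}" by auto
  then have "Max (tri_fst ` set vs) \<in> tri_fst ` set vs" by simp
  then obtain w where w_eq: "Max (tri_fst ` set vs) = tri_fst w" and w: "w \<in> set vs"
    by (rule imageE)
  have w_max: "tri_fst x \<le> tri_fst w" if "x \<in> set vs" for x
    using w_eq that by (metis Max_ge finite_imageI finite_set imageI)
  obtain v where v: "v \<in> set vs" "(v, w) \<in> triple_arcs N"
    using dir_cycle_has_predecessor[OF dc w] by blast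
  obtain u where u: "u \<in> set vs" "(u, v) \<in> triple_arcs N"
    using dir_cycle_has_predecessor[OF dc v(1)] by blast
  have "(w, u) \<in> triple_arcs N"
    using triple_arcs_close_path[OF u(2) v(2)] w_max u(1) v(1) by simp
  then show ?thesis using induced_dir_cycle_triangle[OF cyc u(1) v(1) w] u v by simp
qed

lemma triples_in_C3: "in_C3 (triple_vertices N) (triple_arcs N)"
  using triple_arcs_no_TT3 triple_arcs_no_long_induced_cycle by (auto simp: in_C3_def)

lemma triples_dicolouring_ge:
  assumes "partn_lst {..<N} (replicate k 5) 3"
    and col: "dicolouring (triple_vertices N) (triple_arcs N) j c"
  shows "k \<le> j"
proof (rule ccontr)
  assume "\<not> k \<le> j"
  have "c (triple a b d) < k" if "a < b" "b < d" "d < N" for a b d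
  proof -
    have "c (triple a b d) < j"
      using col that by (simp add: dicolouring_def)
    then show ?thesis using \<open>\<not> k \<le> j\<close> by linarith
  qed
  then obtain a b d e f where "a < b" "b < d" "d < e" "e < f" "f < N"
    "c (triple a b d) = c (triple b d e)" "c (triple b d e) = c (triple d e f)"
    using monochromatic_consecutive_triples[OF assms(1), of "\<lambda>a b d. c (triple a b d)"] by blast
  then show False
    by (intro dicolouring_no_monochromatic_triangle[OF col,
          of "triple a b d" "triple b d e" "triple d e f"])
       (auto simp: triple_arcs_def)
qed

theorem theorem1:
  fixes k :: nat
  assumes "k \<ge> 1"
  shows "\<exists>(V :: nat set) A. digraph V A \<and> in_C3 V A \<and> dichromatic_number V A \<ge> k"
proof -
  obtain N :: nat where N: "partn_lst {..<N} (replicate k 5) 3" using ramsey_full by blast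
  have "k \<le> dichromatic_number (triple_vertices N) (triple_arcs N)"
    using dichromatic_number_geI[OF digraph_triples] triples_dicolouring_ge[OF N] by blast
  then show ?thesis using digraph_triples triples_in_C3 by blast
qed

end
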